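(* If $G$ is a (not necessarily connected) graph of order $n\ge 4$, then $7\le \gamma_{qtR}(G)+\gamma_{qtR}(\overline{G})\le n+5$. Moreover: (i) $\gamma_{qtR}(G)+\gamma_{qtR}(\overline{G})=7$ if and only if $G$ is one of $K_4$, $\overline{K_4}$, $K_4-e$, $\overline{K_4-e}$, or $G\in\mathcal{F}_1\cup\mathcal{F}'_1$; (ii) $\gamma_{qtR}(G)+\gamma_{qtR}(\overline{G})=n+5$ if and only if $G$ is the cycle $C_5$.
   Context: All graphs are finite, simple and undirected; $\overline{G}$ denotes the complement of $G$, and $K_4-e$ is $K_4$ with one edge removed. $\mathcal{F}_1$ is the family of all graphs of order $n$ that have exactly one vertex of degree $n-1$ and at least one vertex of degree one; $\mathcal{F}'_1$ is the family of complements of graphs in $\mathcal{F}_1$. For $f:V(G)\to\{0,1,2\}$ write $V_i=\{v:f(v)=i\}$; weight $\omega(f)=|V_1|+2|V_2|$. A quasi-total Roman dominating function (QTRDF) is an $f$ such that every vertex labeled $0$ is adjacent to a vertex labeled $2$, and every vertex isolated in the subgraph induced by $V_1\cup V_2$ has label $1$; $\gamma_{qtR}(G)$ is the minimum weight of a QTRDF. *)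

theory Defs
  imports Main
begin

definition graph :: "'a set \<Rightarrow> ('a \<Rightarrow> 'a \<Rightarrow> bool) \<Rightarrow> bool" where
  "graph V E \<longleftrightarrow> finite V \<and> (\<forall>u v. E u v \<longrightarrow> u \<in> V \<and> v \<in> V \<and> u \<noteq> v \<and> E v u)"

definition compl :: "'a set \<Rightarrow> ('a \<Rightarrow> 'a \<Rightarrow> bool) \<Rightarrow> 'a \<Rightarrow> 'a \<Rightarrow> bool" where
  "compl V E u v \<longleftrightarrow> u \<in> V \<and> v \<in> V \<and> u \<noteq> v \<and> \<not> E u v"

definition degree :: "'a set \<Rightarrow> ('a \<Rightarrow> 'a \<Rightarrow> bool) \<Rightarrow> 'a \<Rightarrow> nat" where
  "degree V E v = card {u \<in> V. E v u}"

definition graph_iso :: "'a set \<Rightarrow> ('a \<Rightarrow> 'a \<Rightarrow> bool) \<Rightarrow> 'b set \<Rightarrow> ('b \<Rightarrow> 'b \<Rightarrow> bool) \<Rightarrow> bool" where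
  "graph_iso V E W F \<longleftrightarrow> (\<exists>h. bij_betw h V W \<and> (\<forall>u\<in>V. \<forall>v\<in>V. E u v \<longleftrightarrow> F (h u) (h v)))"

definition K4 :: "nat \<Rightarrow> nat \<Rightarrow> bool" where
  "K4 u v \<longleftrightarrow> u \<in> {0..<4} \<and> v \<in> {0..<4} \<and> u \<noteq> v"

definition K4_minus_e :: "nat \<Rightarrow> nat \<Rightarrow> bool" where
  "K4_minus_e u v \<longleftrightarrow> K4 u v \<and> {u, v} \<noteq> {0, 1}"

definition C5 :: "nat \<Rightarrow> nat \<Rightarrow> bool" where
  "C5 u v \<longleftrightarrow> u \<in> {0..<5} \<and> v \<in> {0..<5} \<and> ((u + 1) mod 5 = v \<or> (v + 1) mod 5 = u)"

definition in_F1 :: "'a set \<Rightarrow> ('a \<Rightarrow> 'a \<Rightarrow> bool) \<Rightarrow> bool" where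
  "in_F1 V E \<longleftrightarrow> card {v \<in> V. degree V E v = card V - 1} = 1 \<and> (\<exists>v\<in>V. degree V E v = 1)"

definition in_F1' :: "'a set \<Rightarrow> ('a \<Rightarrow> 'a \<Rightarrow> bool) \<Rightarrow> bool" where
  "in_F1' V E \<longleftrightarrow> in_F1 V (compl V E)"

definition qtrdf :: "'a set \<Rightarrow> ('a \<Rightarrow> 'a \<Rightarrow> bool) \<Rightarrow> ('a \<Rightarrow> nat) \<Rightarrow> bool" where
  "qtrdf V E f \<longleftrightarrow>
     (\<forall>v\<in>V. f v \<le> 2) \<and>
     (\<forall>v\<in>V. f v = 0 \<longrightarrow> (\<exists>u\<in>V. E v u \<and> f u = 2)) \<and>
     (\<forall>v\<in>V. f v \<ge> 1 \<and> \<not> (\<exists>u\<in>V. E v u \<and> f u \<ge> 1) \<longrightarrow> f v = 1)"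

text \<open>Weight |V1| + 2|V2| equals the sum of labels.\<close>
definition weight :: "'a set \<Rightarrow> ('a \<Rightarrow> nat) \<Rightarrow> nat" where
  "weight V f = (\<Sum>v\<in>V. f v)"

definition gamma_qtR :: "'a set \<Rightarrow> ('a \<Rightarrow> 'a \<Rightarrow> bool) \<Rightarrow> nat" where
  "gamma_qtR V E = Inf {weight V f | f. qtrdf V E f}"

end

theory Submission
  imports Defs
begin

text \<open>
  A QTRDF of weight less than n has a vertex labelled 2 with a positively labelled neighbour,
  and every isolated vertex is labelled 1; hence \<open>\<gamma>\<^sub>q\<^sub>t\<^sub>R(G) \<ge> min n (3 + #isolated)\<close>,
  and a graph attaining the value 3 + #isolated below n has a vertex adjacent to all
  non-isolated vertices. The isolated vertices of the complement are the universal vertices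
  of G, which gives the lower bound 7, attained exactly when one of the two graphs has a
  universal vertex and the other has \<open>\<gamma>\<^sub>q\<^sub>t\<^sub>R \<le> 4\<close>; separate arguments for n = 4 and
  n \<ge> 5 identify these graphs as K4, K4-e, the members of F1 and their complements.

  Labelling a vertex v by 2, one neighbour and all non-neighbours of v by 1 gives
  \<open>\<gamma>\<^sub>q\<^sub>t\<^sub>R(G) + deg v \<le> n + 2\<close>. Applied to a vertex of maximum degree in G and of
  maximum degree in the complement this yields the bound n + 5, with equality only for an
  r-regular graph with both bounds tight. Labelling the ends of an edge by 2 then shows that
  a neighbour of v has at most one neighbour outside N[v], while a non-neighbour of v has at
  least r - 1 neighbours in N(v); double counting forces r = 2 and n = 5, i.e. C5.
\<close>

section \<open>Graphs, complements and degrees\<close>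

lemma graph_adjD:
  assumes "graph V E" "E u v"
  shows "u \<in> V" "v \<in> V" "u \<noteq> v" "E v u"
  using assms unfolding graph_def by blast+

lemma graph_finite: "graph V E \<Longrightarrow> finite V"
  unfolding graph_def by blast

lemma graph_compl: "graph V E \<Longrightarrow> graph V (compl V E)"
  unfolding graph_def compl_def by blast

lemma compl_compl: "graph V E \<Longrightarrow> compl V (compl V E) = E"
  unfolding graph_def compl_def by (intro ext) blast

lemma degree_compl:
  assumes g: "graph V E" and v: "v \<in> V"
  shows "degree V (compl V E) v + degree V E v = card V - 1"
proof -
  have "V - {v} = {u \<in> V. compl V E v u} \<union> {u \<in> V. E v u}"
    using v graph_adjD[OF g] unfolding compl_def by blast
  moreover have "{u \<in> V. compl V E v u} \<inter> {u \<in> V. E v u} = {}"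
    unfolding compl_def by blast
  ultimately have "card (V - {v}) = degree V (compl V E) v + degree V E v"
    unfolding degree_def using graph_finite[OF g] by (metis card_Un_disjoint finite_Diff finite_Un)
  thus ?thesis using v graph_finite[OF g] by simp
qed

lemma degree_eq_0_iff: "finite V \<Longrightarrow> degree V E v = 0 \<longleftrightarrow> (\<forall>u\<in>V. \<not> E v u)"
  unfolding degree_def by auto

definition universal :: "'a set \<Rightarrow> ('a \<Rightarrow> 'a \<Rightarrow> bool) \<Rightarrow> 'a set" where
  "universal V E = {v \<in> V. degree V E v = card V - 1}"

definition isolated :: "'a set \<Rightarrow> ('a \<Rightarrow> 'a \<Rightarrow> bool) \<Rightarrow> 'a set" where
  "isolated V E = {v \<in> V. \<forall>u. \<not> E v u}"

lemma universal_iff: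
  assumes "graph V E"
  shows "v \<in> universal V E \<longleftrightarrow> v \<in> V \<and> (\<forall>u\<in>V. u \<noteq> v \<longrightarrow> E v u)"
proof (cases "v \<in> V")
  case True
  have "degree V E v = card V - 1 \<longleftrightarrow> degree V (compl V E) v = 0"
    using degree_compl[OF assms True] by linarith
  also have "\<dots> \<longleftrightarrow> (\<forall>u\<in>V. u \<noteq> v \<longrightarrow> E v u)"
    using graph_finite[OF assms] True by (auto simp: degree_eq_0_iff compl_def)
  finally show ?thesis using True unfolding universal_def by simp
qed (simp add: universal_def)

lemma isolated_compl: "graph V E \<Longrightarrow> isolated V (compl V E) = universal V E"
  unfolding isolated_def by (auto simp: universal_iff compl_def)

section \<open>Quasi-total Roman dominating functions\<close>

lemma qtrdf_iff:
  "qtrdf V E f \<longleftrightarrow> (\<forall>v\<in>V. f v \<le> 2 \<and> (f v = 0 \<longrightarrow> (\<exists>u\<in>V. E v u \<and> f u = 2))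
     \<and> (f v = 2 \<longrightarrow> (\<exists>u\<in>V. E v u \<and> 1 \<le> f u)))"
proof -
  have "f v \<le> 2 \<Longrightarrow> (1 \<le> f v \<and> \<not> (\<exists>u\<in>V. E v u \<and> 1 \<le> f u) \<longrightarrow> f v = 1)
          \<longleftrightarrow> (f v = 2 \<longrightarrow> (\<exists>u\<in>V. E v u \<and> 1 \<le> f u))" for v
    by (cases "f v") (auto simp: numeral_2_eq_2)
  thus ?thesis unfolding qtrdf_def by blast
qed

lemma qtrdf_isolated:
  assumes "qtrdf V E f" "v \<in> isolated V E"
  shows "f v = 1"
proof -
  have "\<not> E v u" for u using assms(2) unfolding isolated_def by blast
  hence "f v \<noteq> 0" "f v \<noteq> 2" using assms unfolding qtrdf_iff isolated_def by blast+
  moreover have "f v \<le> 2" using assms unfolding qtrdf_iff isolated_def by blast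
  ultimately show ?thesis by linarith
qed

lemma gamma_qtR_le: "qtrdf V E f \<Longrightarrow> gamma_qtR V E \<le> weight V f"
  unfolding gamma_qtR_def by (rule cInf_lower) auto

lemma gamma_qtR_attained:
  obtains f where "qtrdf V E f" "gamma_qtR V E = weight V f"
proof -
  have "qtrdf V E (\<lambda>_. 1)" unfolding qtrdf_def by auto
  hence "{weight V f | f. qtrdf V E f} \<noteq> {}" by blast
  from Inf_nat_def1[OF this] show ?thesis using that unfolding gamma_qtR_def by blast
qed

lemma gamma_qtR_le_card: "gamma_qtR V E \<le> card V"
proof -
  have "qtrdf V E (\<lambda>_. 1)" unfolding qtrdf_def by auto
  from gamma_qtR_le[OF this] show ?thesis by (simp add: weight_def)
qed

section \<open>Upper bounds from explicit labellings\<close>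

definition labelling :: "'a set \<Rightarrow> 'a set \<Rightarrow> 'a \<Rightarrow> nat" where
  "labelling V2 V1 v = (if v \<in> V2 then 2 else if v \<in> V1 then 1 else 0)"

lemma weight_labelling:
  assumes "finite V" "V2 \<subseteq> V" "V1 \<subseteq> V" "V2 \<inter> V1 = {}"
  shows "weight V (labelling V2 V1) = 2 * card V2 + card V1"
proof -
  have "weight V (labelling V2 V1) = (\<Sum>v\<in>V. (if v \<in> V2 then 2 else 0) + (if v \<in> V1 then 1 else 0))"
    unfolding weight_def labelling_def using assms(4) by (intro sum.cong) auto
  also have "\<dots> = 2 * card V2 + card V1"
    using assms(1-3) by (simp add: sum.distrib sum.If_cases Int_absorb1)
  finally show ?thesis .
qed

lemma gamma_qtR_le_labelling:
  assumes "finite V" "V2 \<subseteq> V" "V1 \<subseteq> V" "V2 \<inter> V1 = {}"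
    and "\<forall>v\<in>V - (V2 \<union> V1). \<exists>u\<in>V2. E v u"
    and "\<forall>v\<in>V2. \<exists>u\<in>V2 \<union> V1. E v u"
  shows "gamma_qtR V E \<le> 2 * card V2 + card V1"
proof -
  have lab: "labelling V2 V1 v = 2 \<longleftrightarrow> v \<in> V2" "labelling V2 V1 v = 0 \<longleftrightarrow> v \<notin> V2 \<union> V1"
      "1 \<le> labelling V2 V1 v \<longleftrightarrow> v \<in> V2 \<union> V1" "labelling V2 V1 v \<le> 2" for v
    unfolding labelling_def by auto
  have "qtrdf V E (labelling V2 V1)"
    unfolding qtrdf_iff
  proof (intro ballI conjI impI)
    fix v assume "v \<in> V"
    show "labelling V2 V1 v \<le> 2" by (rule lab(4))
    show "\<exists>u\<in>V. E v u \<and> labelling V2 V1 u = 2" if "labelling V2 V1 v = 0"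
      using that \<open>v \<in> V\<close> assms(2,5) unfolding lab by blast
    show "\<exists>u\<in>V. E v u \<and> 1 \<le> labelling V2 V1 u" if "labelling V2 V1 v = 2"
      using that assms(2,3,6) unfolding lab by blast
  qed
  from gamma_qtR_le[OF this] show ?thesis using weight_labelling[OF assms(1-4)] by simp
qed

lemma gamma_qtR_le_compl_degree:
  assumes g: "graph V E" and "E v u"
  shows "gamma_qtR V E \<le> degree V (compl V E) v + 3"
proof -
  note uv = graph_adjD[OF g \<open>E v u\<close>]
  let ?M = "{w \<in> V. compl V E v w}"
  have "gamma_qtR V E \<le> 2 * card {v} + card (insert u ?M)"
    using graph_finite[OF g] uv graph_adjD[OF g]
    by (intro gamma_qtR_le_labelling) (auto simp: compl_def)
  moreover have "card (insert u ?M) = degree V (compl V E) v + 1"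
    using graph_finite[OF g] \<open>E v u\<close> unfolding degree_def compl_def by simp
  ultimately show ?thesis by simp
qed

lemma gamma_qtR_le_edge:
  assumes g: "graph V E" and "E v x"
  shows "gamma_qtR V E \<le> card {y \<in> V. compl V E v y \<and> compl V E x y} + 4"
proof -
  note vx = graph_adjD[OF g \<open>E v x\<close>]
  have "gamma_qtR V E \<le> 2 * card {v, x} + card {y \<in> V. compl V E v y \<and> compl V E x y}"
    using graph_finite[OF g] vx graph_adjD[OF g]
    by (intro gamma_qtR_le_labelling) (auto simp: compl_def)
  thus ?thesis using vx by simp
qed

lemma gamma_qtR_compl_le_degree:
  assumes g: "graph V E" and "compl V E y w"
  shows "gamma_qtR V (compl V E) \<le> degree V E y + 3"
  using gamma_qtR_le_compl_degree[OF graph_compl[OF g] assms(2)] compl_compl[OF g] by simp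

lemma gamma_qtR_le_3_of_universal:
  assumes g: "graph V E" and "2 \<le> card V" and x: "x \<in> universal V E"
  shows "gamma_qtR V E \<le> 3"
proof -
  have "x \<in> V" using x unfolding universal_def by blast
  hence "card (V - {x}) \<noteq> 0" using \<open>2 \<le> card V\<close> graph_finite[OF g] by simp
  then obtain u where "u \<in> V - {x}" by (metis all_not_in_conv card.empty)
  hence "E x u" using x universal_iff[OF g] by blast
  moreover have "degree V (compl V E) x = 0"
    using x graph_adjD[OF g] degree_compl[OF g, of x] unfolding universal_def by auto
  ultimately show ?thesis using gamma_qtR_le_compl_degree[OF g] by fastforce
qed

section \<open>Lower bounds\<close>

lemma qtrdf_heavy_edge:
  assumes "qtrdf V E f" and "weight V f < card V"
  obtains x u where "E x u" "f x = 2" "1 \<le> f u"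
proof (cases "\<exists>x\<in>V. f x = 2")
  case True
  thus ?thesis using assms(1) that unfolding qtrdf_iff by blast
next
  case False
  hence "\<forall>v\<in>V. 1 \<le> f v" using assms(1) unfolding qtrdf_iff by (metis less_one not_le)
  hence "(\<Sum>v\<in>V. 1) \<le> weight V f" unfolding weight_def by (intro sum_mono) auto
  thus ?thesis using assms(2) by simp
qed

lemma qtrdf_weight_split:
  assumes g: "graph V E" and q: "qtrdf V E f" and "E x u"
  shows "weight V f = f x + f u + card (isolated V E) + sum f (V - ({x, u} \<union> isolated V E))"
proof -
  let ?S = "{x, u} \<union> isolated V E"
  note xu = graph_adjD[OF g \<open>E x u\<close>]
  have fin: "finite V" using graph_finite[OF g] .
  have I: "isolated V E \<subseteq> V" "finite (isolated V E)" "x \<notin> isolated V E" "u \<notin> isolated V E"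
    using \<open>E x u\<close> xu fin unfolding isolated_def by (auto intro: finite_subset)
  have "sum f (isolated V E) = card (isolated V E)"
    using qtrdf_isolated[OF q] by simp
  hence "sum f ?S = f x + f u + card (isolated V E)"
    using I xu by (simp add: sum.insert_if)
  moreover have "weight V f = sum f (V - ?S) + sum f ?S"
    unfolding weight_def using fin xu I by (intro sum.subset_diff) auto
  ultimately show ?thesis by simp
qed

lemma qtrdf_weight_ge:
  assumes g: "graph V E" and q: "qtrdf V E f"
  shows "min (card V) (card (isolated V E) + 3) \<le> weight V f"
proof (cases "weight V f < card V")
  case True
  then obtain x u where "E x u" "f x = 2" "1 \<le> f u" using qtrdf_heavy_edge[OF q] by blast
  thus ?thesis using qtrdf_weight_split[OF g q \<open>E x u\<close>] by simp
qed simp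

lemma gamma_qtR_ge:
  assumes "graph V E"
  shows "min (card V) (card (isolated V E) + 3) \<le> gamma_qtR V E"
  using qtrdf_weight_ge[OF assms] gamma_qtR_attained by metis

text \<open>In a minimum function of this weight, the vertex labelled 2 is the only one available
  to dominate the vertices labelled 0, which are all non-isolated vertices but two.\<close>
lemma gamma_qtR_small_imp_dominating_vertex:
  assumes g: "graph V E" and le: "gamma_qtR V E \<le> card (isolated V E) + 3"
    and lt: "card (isolated V E) + 3 < card V"
  obtains x where "x \<in> V" "\<forall>y\<in>V - isolated V E. y \<noteq> x \<longrightarrow> E x y"
proof -
  obtain f where q: "qtrdf V E f" and w: "gamma_qtR V E = weight V f"
    using gamma_qtR_attained by blast
  have "weight V f < card V" using le lt w by linarith
  then obtain x u where xu: "E x u" "f x = 2" "1 \<le> f u"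
    using qtrdf_heavy_edge[OF q] by blast
  note split = qtrdf_weight_split[OF g q \<open>E x u\<close>]
  have fu: "f u = 1" using split le w xu by linarith
  have zero: "f y = 0" if "y \<in> V - ({x, u} \<union> isolated V E)" for y
    using split le w xu member_le_sum[OF that, of f] graph_finite[OF g] by fastforce
  have "E x y" if y: "y \<in> V - isolated V E" "y \<noteq> x" for y
  proof (cases "y = u")
    case False
    hence "f y = 0" using zero y by blast
    then obtain z where "E y z" "f z = 2" using q y unfolding qtrdf_iff by blast
    moreover have "z \<in> V" "z \<notin> isolated V E"
      using graph_adjD[OF g \<open>E y z\<close>] unfolding isolated_def by blast+
    ultimately have "z = x" using zero fu by fastforce
    thus ?thesis using graph_adjD[OF g \<open>E y z\<close>] by blast
  qed (use xu in blast)
  thus ?thesis using that graph_adjD[OF g \<open>E x u\<close>] by blast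
qed

lemma isolated_eq_universal_compl: "graph V E \<Longrightarrow> isolated V E = universal V (compl V E)"
  using isolated_compl[OF graph_compl] compl_compl by metis

lemma gamma_qtR_ge_4_of_isolated:
  assumes g: "graph V E" and "4 \<le> card V" and "isolated V E \<noteq> {}"
  shows "4 \<le> gamma_qtR V E"
proof -
  have "card (isolated V E) \<noteq> 0"
    using assms(3) graph_finite[OF g] unfolding isolated_def by simp
  thus ?thesis using gamma_qtR_ge[OF g] assms(2) by linarith
qed

lemma gamma_qtR_ge_4_of_no_universal:
  assumes g: "graph V E" and n: "4 \<le> card V" and "universal V E = {}"
  shows "4 \<le> gamma_qtR V E"
proof (rule ccontr)
  assume "\<not> 4 \<le> gamma_qtR V E"
  hence I: "isolated V E = {}" using gamma_qtR_ge_4_of_isolated[OF g n] by linarith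
  hence "gamma_qtR V E \<le> card (isolated V E) + 3" "card (isolated V E) + 3 < card V"
    using \<open>\<not> 4 \<le> gamma_qtR V E\<close> n by simp_all
  then obtain x where "x \<in> V" "\<forall>y\<in>V - isolated V E. y \<noteq> x \<longrightarrow> E x y"
    by (rule gamma_qtR_small_imp_dominating_vertex[OF g])
  thus False using \<open>universal V E = {}\<close> universal_iff[OF g] I by blast
qed

section \<open>The sum 7\<close>

lemma gamma_qtR_sum_eq_7_iff:
  assumes g: "graph V E" and n: "4 \<le> card V"
  shows "7 \<le> gamma_qtR V E + gamma_qtR V (compl V E)"
    and "gamma_qtR V E + gamma_qtR V (compl V E) = 7 \<longleftrightarrow>
      universal V E \<noteq> {} \<and> gamma_qtR V (compl V E) \<le> 4 \<or>
      universal V (compl V E) \<noteq> {} \<and> gamma_qtR V E \<le> 4"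
proof -
  note gc = graph_compl[OF g]
  have ge3: "3 \<le> gamma_qtR V E" "3 \<le> gamma_qtR V (compl V E)"
    using gamma_qtR_ge[OF g] gamma_qtR_ge[OF gc] n by fastforce+
  have ge4: "universal V E = {} \<Longrightarrow> 4 \<le> gamma_qtR V E"
      "universal V (compl V E) = {} \<Longrightarrow> 4 \<le> gamma_qtR V (compl V E)"
      "universal V E \<noteq> {} \<Longrightarrow> 4 \<le> gamma_qtR V (compl V E)"
      "universal V (compl V E) \<noteq> {} \<Longrightarrow> 4 \<le> gamma_qtR V E"
    using gamma_qtR_ge_4_of_no_universal[OF g n] gamma_qtR_ge_4_of_no_universal[OF gc n]
      gamma_qtR_ge_4_of_isolated[OF gc n] gamma_qtR_ge_4_of_isolated[OF g n]
      isolated_compl[OF g] isolated_eq_universal_compl[OF g] by auto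
  have le3: "universal V E \<noteq> {} \<Longrightarrow> gamma_qtR V E \<le> 3"
      "universal V (compl V E) \<noteq> {} \<Longrightarrow> gamma_qtR V (compl V E) \<le> 3"
    using gamma_qtR_le_3_of_universal[OF g] gamma_qtR_le_3_of_universal[OF gc] n by fastforce+
  show "7 \<le> gamma_qtR V E + gamma_qtR V (compl V E)"
    using ge3 ge4 by fastforce
  show "gamma_qtR V E + gamma_qtR V (compl V E) = 7 \<longleftrightarrow>
      universal V E \<noteq> {} \<and> gamma_qtR V (compl V E) \<le> 4 \<or>
      universal V (compl V E) \<noteq> {} \<and> gamma_qtR V E \<le> 4"
    using ge3 ge4 le3 by fastforce
qed

lemma graph_iso_of_list:
  assumes "distinct xs" "set xs = V"
    and "\<And>i j. i < length xs \<Longrightarrow> j < length xs \<Longrightarrow> E (xs ! i) (xs ! j) \<longleftrightarrow> F i j"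
  shows "graph_iso V E {0..<length xs} F"
proof -
  have b: "bij_betw ((!) xs) {0..<length xs} V"
    using bij_betw_nth[OF assms(1) _ assms(2)[symmetric]] by (simp add: atLeast0LessThan)
  define h where "h = inv_into {0..<length xs} ((!) xs)"
  have h: "bij_betw h V {0..<length xs}" unfolding h_def by (rule bij_betw_inv_into[OF b])
  have "xs ! h u = u" "h u < length xs" if "u \<in> V" for u
    unfolding h_def using b that bij_betw_inv_into_right bij_betwE[OF h] h_def by fastforce+
  thus ?thesis unfolding graph_iso_def using h assms(3) by metis
qed

definition in_K4_K4e_F1 :: "'a set \<Rightarrow> ('a \<Rightarrow> 'a \<Rightarrow> bool) \<Rightarrow> bool" where
  "in_K4_K4e_F1 V E \<longleftrightarrow>
     graph_iso V E {0..<4} K4 \<or> graph_iso V E {0..<4} K4_minus_e \<or> in_F1 V E"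

lemma in_F1_of_card_4:
  assumes g: "graph V E" and n: "card V = 4" and U: "universal V E = {x}"
  shows "in_F1 V E"
proof -
  have x: "x \<in> universal V E" using U by simp
  hence "x \<in> V" unfolding universal_def by blast
  hence "card (V - {x}) = 3" using n graph_finite[OF g] by simp
  then obtain a b c where abc: "V - {x} = {a, b, c}" "a \<noteq> b" "b \<noteq> c" "a \<noteq> c"
    using card_3_iff by metis
  have V: "V = {x, a, b, c}" using abc \<open>x \<in> V\<close> by blast
  have sym: "E u w \<Longrightarrow> E w u" and irr: "\<not> E u u" for u w
    using graph_adjD[OF g] by blast+
  have Ex: "E x w" "E w x" if "w \<in> {a, b, c}" for w
  proof -
    have "w \<in> V - {x}" using that abc by blast
    thus "E x w" using x unfolding universal_iff[OF g] by blast
    thus "E w x" by (rule sym)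
  qed
  have no_two: "\<not> (E u v \<and> E u w)" if u: "u \<in> {a, b, c}" and V': "V = {x, u, v, w}" for u v w
  proof
    assume "E u v \<and> E u w"
    hence "\<forall>z\<in>V. z \<noteq> u \<longrightarrow> E u z" using Ex(2)[OF u] unfolding V' by blast
    hence "u \<in> universal V E" unfolding universal_iff[OF g] using V' by blast
    thus False using U u abc by blast
  qed
  have "\<not> (E a b \<and> E a c)" "\<not> (E b a \<and> E b c)" "\<not> (E c a \<and> E c b)"
    by (rule no_two; use V in blast)+
  hence "\<exists>v\<in>{a, b, c}. \<forall>w\<in>{a, b, c}. \<not> E v w"
    using sym irr by blast
  then obtain v where v: "v \<in> {a, b, c}" "\<forall>w\<in>{a, b, c}. \<not> E v w" by blast
  hence "{w \<in> V. E v w} = {x}" using Ex(2) unfolding V by blast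
  hence "degree V E v = 1" unfolding degree_def by simp
  thus ?thesis unfolding in_F1_def universal_def[symmetric] using U v V by auto
qed

lemma graph_iso_K4_or_K4_minus_e_of_two_universal:
  assumes g: "graph V E" and n: "card V = 4"
    and x: "x \<in> universal V E" and y: "y \<in> universal V E" "y \<noteq> x"
  shows "graph_iso V E {0..<4} K4 \<or> graph_iso V E {0..<4} K4_minus_e"
proof -
  have xy: "x \<in> V" "y \<in> V" using x y unfolding universal_def by blast+
  hence "card (V - {x, y}) = 2" using n y graph_finite[OF g] by (simp add: card_Diff_subset)
  then obtain s t where st: "V - {x, y} = {s, t}" "s \<noteq> t" using card_2_iff by metis
  have V: "set [s, t, x, y] = V" and dist: "distinct [s, t, x, y]"
    using st xy y(2) by auto
  have "E x s" "E x t" "E x y" "E y s" "E y t"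
    using x y st xy unfolding universal_iff[OF g] by blast+
  hence adj: "E x s" "E x t" "E x y" "E y s" "E y t" "E s x" "E t x" "E y x" "E s y" "E t y"
    using graph_adjD[OF g] by blast+
  have irr: "\<not> E u u" for u using graph_adjD[OF g] by blast
  have E_st: "E t s \<longleftrightarrow> E s t" using graph_adjD[OF g] by blast
  \<comment> \<open>s and t become the vertices 0 and 1, the ends of the edge missing in K4-e\<close>
  have iso: "graph_iso V E {0..<4} F"
    if "\<And>i j. i < 4 \<Longrightarrow> j < 4 \<Longrightarrow> i \<noteq> j \<Longrightarrow> F i j \<longleftrightarrow> (E s t \<or> {i, j} \<noteq> {0, 1})"
      "\<And>i. \<not> F i i" for F :: "nat \<Rightarrow> nat \<Rightarrow> bool"
  proof -
    have "graph_iso V E {0..<length [s, t, x, y]} F"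
    proof (rule graph_iso_of_list[OF dist V])
      fix i j assume "i < length [s, t, x, y]" "j < length [s, t, x, y]"
      hence "i \<in> {0, 1, 2, 3}" "j \<in> {0, 1, 2, 3}" by auto
      thus "E ([s, t, x, y] ! i) ([s, t, x, y] ! j) \<longleftrightarrow> F i j"
        using that adj irr E_st by (auto simp: doubleton_eq_iff)
    qed
    thus ?thesis by (simp add: numeral_eq_Suc)
  qed
  show ?thesis
  proof (cases "E s t")
    case True
    hence "graph_iso V E {0..<4} K4" by (intro iso) (auto simp: K4_def)
    thus ?thesis by simp
  next
    case False
    hence "graph_iso V E {0..<4} K4_minus_e" by (intro iso) (auto simp: K4_minus_e_def K4_def)
    thus ?thesis by simp
  qed
qed

lemma in_K4_K4e_F1_of_card_4:
  assumes g: "graph V E" and n: "card V = 4" and x: "x \<in> universal V E"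
  shows "in_K4_K4e_F1 V E"
proof (cases "universal V E = {x}")
  case True
  thus ?thesis using in_F1_of_card_4[OF g n] unfolding in_K4_K4e_F1_def by blast
next
  case False
  then obtain y where "y \<in> universal V E" "y \<noteq> x" using x by blast
  thus ?thesis using graph_iso_K4_or_K4_minus_e_of_two_universal[OF g n x]
    unfolding in_K4_K4e_F1_def by blast
qed

lemma in_F1_of_universal:
  assumes g: "graph V E" and n: "5 \<le> card V" and x: "x \<in> universal V E"
    and le: "gamma_qtR V (compl V E) \<le> 4"
  shows "in_F1 V E"
proof -
  note gc = graph_compl[OF g]
  have fin: "finite (universal V E)"
    using graph_finite[OF g] unfolding universal_def by simp
  have "card (universal V E) \<le> 1"
    using gamma_qtR_ge[OF gc] le n unfolding isolated_compl[OF g] by linarith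
  hence "\<forall>u\<in>universal V E. u = x" using x card_le_Suc0_iff_eq[OF fin] by auto
  hence U: "universal V E = {x}" using x by blast
  have "gamma_qtR V (compl V E) \<le> card (isolated V (compl V E)) + 3"
    "card (isolated V (compl V E)) + 3 < card V"
    using le n unfolding isolated_compl[OF g] U by simp_all
  then obtain z where "z \<in> V" "\<forall>y\<in>V - isolated V (compl V E). y \<noteq> z \<longrightarrow> compl V E z y"
    by (rule gamma_qtR_small_imp_dominating_vertex[OF gc])
  note z = this[unfolded isolated_compl[OF g] U]
  have xV: "x \<in> V" and Ex: "\<forall>u\<in>V. u \<noteq> x \<longrightarrow> E x u"
    using x universal_iff[OF g] by blast+
  have "z \<noteq> x"
  proof
    assume "z = x"
    have "card (V - {x}) \<noteq> 0" using n xV graph_finite[OF g] by simp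
    then obtain y where "y \<in> V - {x}" by (metis all_not_in_conv card.empty)
    thus False using z Ex \<open>z = x\<close> unfolding compl_def by blast
  qed
  hence "{w \<in> V. E z w} = {x}"
    using z Ex xV graph_adjD[OF g] unfolding compl_def by blast
  hence "degree V E z = 1" unfolding degree_def by simp
  thus ?thesis unfolding in_F1_def universal_def[symmetric] U using z by auto
qed

lemma graph_iso_degree:
  assumes "graph_iso V E W F"
  obtains h where "bij_betw h V W" "\<forall>v\<in>V. degree V E v = degree W F (h v)"
proof -
  obtain h where h: "bij_betw h V W" "\<forall>u\<in>V. \<forall>v\<in>V. E u v \<longleftrightarrow> F (h u) (h v)"
    using assms unfolding graph_iso_def by blast
  have "degree V E v = degree W F (h v)" if v: "v \<in> V" for v
  proof -
    have "h ` {u \<in> V. E v u} = {w \<in> W. F (h v) w}"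
      using h v by (auto simp: bij_betw_def image_iff)
    moreover have "inj_on h {u \<in> V. E v u}"
      using bij_betw_imp_inj_on[OF h(1)] by (rule inj_on_subset) blast
    ultimately show ?thesis unfolding degree_def by (metis card_image)
  qed
  thus ?thesis using h(1) that by blast
qed

lemma graph_iso_card: "graph_iso V E W F \<Longrightarrow> card V = card W"
  unfolding graph_iso_def using bij_betw_same_card by blast

lemma graph_iso_has_degree:
  assumes "graph_iso V E W F" "w \<in> W"
  shows "\<exists>v\<in>V. degree V E v = degree W F w"
proof -
  obtain h where h: "bij_betw h V W" "\<forall>v\<in>V. degree V E v = degree W F (h v)"
    using graph_iso_degree[OF assms(1)] by blast
  then obtain v where "v \<in> V" "w = h v"
    using assms(2) bij_betw_imp_surj_on[OF h(1)] by blast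
  thus ?thesis using h(2) by blast
qed

lemma universal_of_graph_iso_K4:
  assumes "graph_iso V E {0..<4} K4 \<or> graph_iso V E {0..<4} K4_minus_e"
  shows "universal V E \<noteq> {}"
proof -
  have set4: "{0..<4::nat} = set [0, 1, 2, 3]" by auto
  have "degree {0..<4} K4 0 = 3" "degree {0..<4} K4_minus_e 2 = 3"
    unfolding degree_def set4 set_filter[symmetric]
    by (simp_all add: K4_minus_e_def K4_def doubleton_eq_iff)
  moreover have "(0::nat) \<in> {0..<4}" "(2::nat) \<in> {0..<4}" by simp_all
  ultimately obtain F and k :: nat
    where iso: "graph_iso V E {0..<4} F" and "k \<in> {0..<4}" "degree {0..<4} F k = 3"
    using assms by blast
  then obtain v where "v \<in> V" "degree V E v = 3" using graph_iso_has_degree by fastforce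
  moreover have "card V = 4" using graph_iso_card[OF iso] by simp
  ultimately show ?thesis unfolding universal_def by auto
qed

lemma in_K4_K4e_F1_iff:
  assumes g: "graph V E" and n: "4 \<le> card V"
  shows "in_K4_K4e_F1 V E \<longleftrightarrow> universal V E \<noteq> {} \<and> gamma_qtR V (compl V E) \<le> 4"
proof
  assume "in_K4_K4e_F1 V E"
  then consider "graph_iso V E {0..<4} K4 \<or> graph_iso V E {0..<4} K4_minus_e" | "in_F1 V E"
    unfolding in_K4_K4e_F1_def by blast
  thus "universal V E \<noteq> {} \<and> gamma_qtR V (compl V E) \<le> 4"
  proof cases
    case 1
    hence "card V = 4" by (auto dest: graph_iso_card)
    thus ?thesis using universal_of_graph_iso_K4[OF 1] gamma_qtR_le_card[of V "compl V E"] by simp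
  next
    case 2
    then obtain y where y: "y \<in> V" "degree V E y = 1" and "card (universal V E) = 1"
      unfolding in_F1_def universal_def[symmetric] by blast
    hence "universal V E \<noteq> {}" by auto
    moreover have "degree V (compl V E) y \<noteq> 0" using degree_compl[OF g y(1)] y n by linarith
    then obtain w where "compl V E y w"
      unfolding degree_eq_0_iff[OF graph_finite[OF g]] by blast
    hence "gamma_qtR V (compl V E) \<le> degree V E y + 3"
      by (rule gamma_qtR_compl_le_degree[OF g])
    ultimately show ?thesis using y by simp
  qed
next
  assume "universal V E \<noteq> {} \<and> gamma_qtR V (compl V E) \<le> 4"
  then obtain x where "x \<in> universal V E" "gamma_qtR V (compl V E) \<le> 4" by blast
  moreover have "card V = 4 \<or> 5 \<le> card V" using n by linarith
  ultimately show "in_K4_K4e_F1 V E"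
    using in_K4_K4e_F1_of_card_4[OF g] in_F1_of_universal[OF g]
    unfolding in_K4_K4e_F1_def by blast
qed

section \<open>The sum n + 5\<close>

lemma gamma_qtR_sum_le_of_edgeless:
  assumes g: "graph V E" and n: "2 \<le> card V" and "\<forall>x u. \<not> E x u"
  shows "gamma_qtR V E + gamma_qtR V (compl V E) \<le> card V + 3"
proof -
  obtain v where "v \<in> V" using n by fastforce
  hence "v \<in> universal V (compl V E)"
    using assms universal_iff[OF graph_compl[OF g]] unfolding compl_def by blast
  hence "gamma_qtR V (compl V E) \<le> 3" using gamma_qtR_le_3_of_universal[OF graph_compl[OF g] n] by blast
  thus ?thesis using gamma_qtR_le_card[of V E] by linarith
qed

lemma gamma_qtR_sum_le_of_edges:
  assumes g: "graph V E" and "E a b" and "compl V E c d"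
  shows "gamma_qtR V E + gamma_qtR V (compl V E) \<le> card V + 5"
    and "gamma_qtR V E + gamma_qtR V (compl V E) = card V + 5 \<Longrightarrow>
      \<exists>r. (\<forall>v\<in>V. degree V E v = r) \<and> card V + 2 \<le> gamma_qtR V E + r \<and>
        r + 3 \<le> gamma_qtR V (compl V E)"
proof -
  let ?s = "gamma_qtR V E + gamma_qtR V (compl V E)"
  have fin: "finite V" using graph_finite[OF g] .
  have upper: "gamma_qtR V E + degree V E x \<le> card V + 2" if "E x u" for x u
  proof -
    have "x \<in> V" using graph_adjD(1)[OF g that] .
    hence "0 < card V" using fin card_gt_0_iff by blast
    thus ?thesis using gamma_qtR_le_compl_degree[OF g that] degree_compl[OF g \<open>x \<in> V\<close>] by linarith
  qed
  note upper_compl = gamma_qtR_compl_le_degree[OF g]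
  have key: "?s + degree V E x \<le> card V + 5 + degree V E y" if "E x u" "compl V E y w" for x u y w
    using upper[OF that(1)] upper_compl[OF that(2)] by linarith
  have deg_le: "degree V E v \<le> card V - 1" if "v \<in> V" for v
    using degree_compl[OF g that] by linarith
  have deg_full: "degree V E y = card V - 1" if "y \<in> V" "\<forall>w. \<not> compl V E y w" for y
    using that degree_compl[OF g that(1)] degree_eq_0_iff[OF fin, of "compl V E" y] by simp
  have deg_0: "degree V E x = 0" if "\<forall>u. \<not> E x u" for x
    using that degree_eq_0_iff[OF fin] by blast
  have aV: "a \<in> V" and cV: "c \<in> V"
    using graph_adjD[OF g \<open>E a b\<close>] \<open>compl V E c d\<close> unfolding compl_def by blast+
  show "?s \<le> card V + 5"
  proof (cases "\<exists>w. compl V E a w")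
    case True
    thus ?thesis using key \<open>E a b\<close> by fastforce
  next
    case False
    thus ?thesis using key[OF \<open>E a b\<close> \<open>compl V E c d\<close>] deg_full[OF aV] deg_le[OF cV] by simp
  qed
  assume s: "?s = card V + 5"
  have mono: "degree V E x \<le> degree V E y" if "x \<in> V" "y \<in> V" for x y
    using key[of x _ y] s deg_0[of x] deg_full[OF that(2)] deg_le[OF that(1)]
    by (cases "\<exists>u. E x u"; cases "\<exists>w. compl V E y w") fastforce+
  have "\<forall>v\<in>V. degree V E v = degree V E a"
    using mono aV by (simp add: le_antisym)
  moreover have "gamma_qtR V (compl V E) \<le> degree V E a + 3"
    using upper_compl[OF \<open>compl V E c d\<close>] calculation cV by simp
  ultimately show "\<exists>r. (\<forall>v\<in>V. degree V E v = r) \<and> card V + 2 \<le> gamma_qtR V E + r \<and>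
        r + 3 \<le> gamma_qtR V (compl V E)"
    using upper[OF \<open>E a b\<close>] s by (intro exI[of _ "degree V E a"]) linarith
qed

lemma sum_card_swap:
  assumes "finite A" "finite B" "\<And>x y. R x y \<longleftrightarrow> R y x"
  shows "(\<Sum>x\<in>A. card {y \<in> B. R x y}) = (\<Sum>y\<in>B. card {x \<in> A. R y x})"
proof -
  have "(\<Sum>x\<in>A. card {y \<in> B. R x y}) = (\<Sum>x\<in>A. \<Sum>y\<in>B. if R x y then 1 else 0)"
    using assms(2) by (simp add: sum.If_cases Int_def)
  also have "\<dots> = (\<Sum>y\<in>B. \<Sum>x\<in>A. if R x y then 1 else 0)" by (rule sum.swap)
  also have "\<dots> = (\<Sum>y\<in>B. card {x \<in> A. R y x})"
    using assms(1) by (simp add: sum.If_cases Int_def assms(3))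
  finally show ?thesis .
qed

lemma degree_2_neighbours:
  assumes g: "graph V E" and "degree V E v = 2" and "E v a"
  obtains b where "b \<noteq> a" "\<And>y. E v y \<longleftrightarrow> y = a \<or> y = b"
proof -
  obtain p q where pq: "{y \<in> V. E v y} = {p, q}" "p \<noteq> q"
    using assms(2) card_2_iff unfolding degree_def by metis
  have N: "E v y \<longleftrightarrow> y = p \<or> y = q" for y
    using pq(1) graph_adjD(2)[OF g, of v y] by blast
  show ?thesis
  proof (cases "a = p")
    case True
    thus ?thesis using that[of q] N pq(2) by blast
  next
    case False
    hence "a = q" using N \<open>E v a\<close> by blast
    thus ?thesis using that[of p] N pq(2) by blast
  qed
qed

lemma graph_iso_C5_of_2_regular:
  assumes g: "graph V E" and n: "card V = 5" and reg: "\<forall>v\<in>V. degree V E v = 2"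
    and common: "\<And>u v. u \<in> V \<Longrightarrow> v \<in> V \<Longrightarrow> u \<noteq> v \<Longrightarrow> \<not> E u v \<Longrightarrow> \<exists>w. E u w \<and> E v w"
  shows "graph_iso V E {0..<5} C5"
proof -
  have sym: "E u w \<Longrightarrow> E w u" and irr: "\<not> E u u" for u w
    using graph_adjD[OF g] by blast+
  have nbrs: "\<exists>b. b \<noteq> a \<and> (\<forall>y. E v y \<longleftrightarrow> y = a \<or> y = b)" if "E v a" for v a
    using degree_2_neighbours[OF g _ that] reg graph_adjD(1)[OF g that] by metis
  obtain v0 where v0: "v0 \<in> V" using n by fastforce
  have "degree V E v0 \<noteq> 0" using reg v0 by simp
  then obtain a where "E v0 a" unfolding degree_eq_0_iff[OF graph_finite[OF g]] by blast
  then obtain b where N0: "b \<noteq> a" "\<And>y. E v0 y \<longleftrightarrow> y = a \<or> y = b" using nbrs by blast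
  obtain p where Na: "\<And>y. E a y \<longleftrightarrow> y = v0 \<or> y = p" using nbrs sym N0 by blast
  obtain q where Nb: "\<And>y. E b y \<longleftrightarrow> y = v0 \<or> y = q" using nbrs sym N0 by blast
  have "V \<subseteq> {v0, a, b, p, q}"
  proof
    fix w assume w: "w \<in> V"
    show "w \<in> {v0, a, b, p, q}"
    proof (cases "w = v0 \<or> E v0 w")
      case False
      then obtain y where "E v0 y" "E y w" using common[OF v0 w] sym by blast
      hence "E a w \<or> E b w" using N0(2)[of y] by auto
      thus ?thesis unfolding Na Nb by blast
    qed (auto simp: N0)
  qed
  moreover have "{v0, a, b, p, q} \<subseteq> V"
    using v0 N0 Na Nb graph_adjD[OF g] by blast
  ultimately have V: "set [v0, a, p, q, b] = V" by auto
  hence dist: "distinct [v0, a, p, q, b]" using n by (intro card_distinct) simp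
  have far: "\<not> E v0 p" "\<not> E b p" "\<not> E v0 q" "\<not> E a q"
    using dist by (auto simp: N0 Na Nb)
  obtain s where Np: "s \<noteq> a" "\<And>y. E p y \<longleftrightarrow> y = a \<or> y = s" using nbrs sym Na by blast
  obtain t where Nq: "t \<noteq> b" "\<And>y. E q y \<longleftrightarrow> y = b \<or> y = t" using nbrs sym Nb by blast
  have "E p s" "E q t" using Np Nq by blast+
  hence "s \<in> V" "t \<in> V" "s \<notin> {v0, a, p, b}" "t \<notin> {v0, b, q, a}"
    using graph_adjD[OF g] Np(1) Nq(1) irr sym far by blast+
  hence "s = q" "t = p" unfolding V[symmetric] by auto
  have "graph_iso V E {0..<length [v0, a, p, q, b]} C5"
  proof (rule graph_iso_of_list[OF dist V])
    fix i j assume "i < length [v0, a, p, q, b]" "j < length [v0, a, p, q, b]"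
    hence "i \<in> {0, 1, 2, 3, 4}" "j \<in> {0, 1, 2, 3, 4}" by auto
    thus "E ([v0, a, p, q, b] ! i) ([v0, a, p, q, b] ! j) \<longleftrightarrow> C5 i j"
      using dist N0 Na Nb Np Nq \<open>s = q\<close> \<open>t = p\<close> by (auto simp: C5_def)
  qed
  thus ?thesis by (simp add: numeral_eq_Suc)
qed

lemma gamma_qtR_sum_le:
  assumes g: "graph V E" and n: "4 \<le> card V"
  shows "gamma_qtR V E + gamma_qtR V (compl V E) \<le> card V + 5"
    and "gamma_qtR V E + gamma_qtR V (compl V E) = card V + 5 \<Longrightarrow>
      \<exists>r. (\<forall>v\<in>V. degree V E v = r) \<and> card V + 2 \<le> gamma_qtR V E + r \<and>
        r + 3 \<le> gamma_qtR V (compl V E)"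
proof -
  let ?s = "gamma_qtR V E + gamma_qtR V (compl V E)"
  have "?s \<le> card V + 5 \<and> (?s = card V + 5 \<longrightarrow>
      (\<exists>r. (\<forall>v\<in>V. degree V E v = r) \<and> card V + 2 \<le> gamma_qtR V E + r \<and>
        r + 3 \<le> gamma_qtR V (compl V E)))"
  proof (cases "\<forall>x u. \<not> E x u")
    case True
    thus ?thesis using gamma_qtR_sum_le_of_edgeless[OF g] n by simp
  next
    case no_edge: False
    show ?thesis
    proof (cases "\<forall>x u. \<not> compl V E x u")
      case True
      hence "gamma_qtR V (compl V E) + gamma_qtR V E \<le> card V + 3"
        using gamma_qtR_sum_le_of_edgeless[OF graph_compl[OF g]] compl_compl[OF g] n by simp
      thus ?thesis by simp
    next
      case False
      then obtain a b c d where "E a b" "compl V E c d" using no_edge by blast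
      from gamma_qtR_sum_le_of_edges[OF g this] show ?thesis by blast
    qed
  qed
  thus "?s \<le> card V + 5"
    and "?s = card V + 5 \<Longrightarrow> \<exists>r. (\<forall>v\<in>V. degree V E v = r) \<and>
      card V + 2 \<le> gamma_qtR V E + r \<and> r + 3 \<le> gamma_qtR V (compl V E)"
    by blast+
qed

lemma qtrdf_weight_ge_card_of_degree_le_2:
  assumes g: "graph V E" and deg: "\<forall>v\<in>V. degree V E v \<le> 2" and q: "qtrdf V E f"
  shows "card V \<le> weight V f"
proof -
  have fin: "finite V" using graph_finite[OF g] .
  define Z where "Z = {v \<in> V. f v = 0}"
  define P where "P = {v \<in> V. 1 \<le> f v}"
  define T where "T = {v \<in> V. f v = 2}"
  have "weight V f = (\<Sum>v\<in>V. (if 1 \<le> f v then 1 else 0) + (if f v = 2 then 1 else 0))"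
    unfolding weight_def
  proof (intro sum.cong refl)
    fix v assume "v \<in> V"
    hence "f v \<le> 2" using q unfolding qtrdf_iff by blast
    thus "f v = (if 1 \<le> f v then 1 else 0) + (if f v = 2 then 1 else 0)" by auto
  qed
  also have "\<dots> = card P + card T"
    unfolding P_def T_def using fin by (simp add: sum.distrib sum.If_cases Int_def)
  finally have w: "weight V f = card P + card T" .
  have "card (Z \<union> P) = card Z + card P"
    using fin by (intro card_Un_disjoint) (auto simp: Z_def P_def)
  moreover have "Z \<union> P = V" unfolding Z_def P_def by auto
  ultimately have cV: "card V = card Z + card P" by simp
  \<comment> \<open>a vertex labelled 2 has a positive neighbour, hence at most one neighbour labelled 0\<close>
  define S where "S t = {z \<in> Z. E t z}" for t
  have "Z \<subseteq> (\<Union>t\<in>T. S t)"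
  proof
    fix z assume "z \<in> Z"
    then obtain t where "t \<in> V" "E z t" "f t = 2" using q unfolding qtrdf_iff Z_def by blast
    thus "z \<in> (\<Union>t\<in>T. S t)" using \<open>z \<in> Z\<close> graph_adjD(4)[OF g] unfolding T_def S_def by blast
  qed
  hence "card Z \<le> card (\<Union>t\<in>T. S t)"
    by (intro card_mono finite_subset[OF _ fin]) (auto simp: S_def Z_def)
  also have "\<dots> \<le> (\<Sum>t\<in>T. card (S t))"
    using fin unfolding T_def by (intro card_UN_le) auto
  also have "\<dots> \<le> (\<Sum>t\<in>T. 1)"
  proof (intro sum_mono)
    fix t assume t: "t \<in> T"
    then obtain u where u: "u \<in> V" "E t u" "1 \<le> f u" using q unfolding qtrdf_iff T_def by blast
    have "S t \<subseteq> {y \<in> V. E t y} - {u}" using u unfolding S_def Z_def by auto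
    hence "card (S t) \<le> card ({y \<in> V. E t y} - {u})" using fin by (intro card_mono) auto
    also have "\<dots> \<le> 1" using u deg t fin unfolding degree_def T_def by auto
    finally show "card (S t) \<le> 1" .
  qed
  finally show ?thesis using w cV by simp
qed

lemma gamma_qtR_ge_card_of_degree_le_2:
  "graph V E \<Longrightarrow> \<forall>v\<in>V. degree V E v \<le> 2 \<Longrightarrow> card V \<le> gamma_qtR V E"
  using qtrdf_weight_ge_card_of_degree_le_2 gamma_qtR_attained by metis

locale qtR_sum_extremal =
  fixes V :: "'a set" and E :: "'a \<Rightarrow> 'a \<Rightarrow> bool" and r :: nat
  assumes graph: "graph V E"
    and regular: "\<forall>v\<in>V. degree V E v = r"
    and gamma_ge: "card V + 2 \<le> gamma_qtR V E + r"
    and gamma_compl_ge: "r + 3 \<le> gamma_qtR V (compl V E)"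
begin

lemma card_ge: "r + 3 \<le> card V"
  using gamma_compl_ge gamma_qtR_le_card order_trans by blast

lemma two_le_degree: "2 \<le> r"
  using gamma_ge gamma_qtR_le_card[of V E] by linarith

lemma degree_compl_eq: "v \<in> V \<Longrightarrow> degree V (compl V E) v = card V - 1 - r"
  using degree_compl[OF graph] regular by (metis add_diff_cancel_right')

lemma few_outer_neighbours:
  assumes v: "v \<in> V" and "E v x"
  shows "card {y \<in> V. compl V E v y \<and> E x y} \<le> 1"
proof -
  let ?A = "{y \<in> V. compl V E v y \<and> E x y}" and ?B = "{y \<in> V. compl V E v y \<and> compl V E x y}"
  have "x \<in> V" using graph_adjD[OF graph \<open>E v x\<close>] by blast
  hence "{y \<in> V. compl V E v y} = ?A \<union> ?B" using \<open>E v x\<close> unfolding compl_def by auto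
  moreover have "card (?A \<union> ?B) = card ?A + card ?B"
    using graph_finite[OF graph] by (intro card_Un_disjoint) (auto simp: compl_def)
  ultimately have "card ?A + card ?B = card V - 1 - r"
    using degree_compl_eq[OF v] unfolding degree_def by simp
  moreover have "gamma_qtR V E \<le> card ?B + 4" using gamma_qtR_le_edge[OF graph \<open>E v x\<close>] .
  ultimately show ?thesis using gamma_ge card_ge by linarith
qed

lemma many_common_neighbours:
  assumes "compl V E v u"
  shows "r \<le> card {y \<in> V. E v y \<and> E u y} + 1"
proof -
  have "gamma_qtR V (compl V E) \<le> card {y \<in> V. E v y \<and> E u y} + 4"
    using gamma_qtR_le_edge[OF graph_compl[OF graph] assms] unfolding compl_compl[OF graph] .
  thus ?thesis using gamma_compl_ge by linarith
qed

text \<open>Double counting of the edges between the neighbourhood and the non-neighbourhood of a vertex.\<close>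
lemma degree_product_le: "(card V - 1 - r) * (r - 1) \<le> r"
proof -
  have "V \<noteq> {}" using card_ge by auto
  then obtain v where v: "v \<in> V" by blast
  let ?N = "{y \<in> V. E v y}" and ?M = "{y \<in> V. compl V E v y}"
  have fin: "finite ?N" "finite ?M" using graph_finite[OF graph] by simp_all
  have sym: "E x y \<longleftrightarrow> E y x" for x y using graph_adjD[OF graph] by blast
  have "(\<Sum>x\<in>?N. card {y \<in> ?M. E x y}) \<le> (\<Sum>x\<in>?N. 1)"
    using few_outer_neighbours[OF v] by (intro sum_mono) simp
  also have "\<dots> = r" using regular v unfolding degree_def by simp
  finally have le: "(\<Sum>x\<in>?N. card {y \<in> ?M. E x y}) \<le> r" .
  have "(\<Sum>y\<in>?M. r - 1) \<le> (\<Sum>y\<in>?M. card {x \<in> ?N. E y x})"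
  proof (intro sum_mono)
    fix y assume "y \<in> ?M"
    hence "r \<le> card {x \<in> V. E v x \<and> E y x} + 1" using many_common_neighbours by blast
    moreover have "{x \<in> ?N. E y x} = {x \<in> V. E v x \<and> E y x}" by blast
    ultimately show "r - 1 \<le> card {x \<in> ?N. E y x}" by simp
  qed
  moreover have "(\<Sum>y\<in>?M. r - 1) = (card V - 1 - r) * (r - 1)"
    using degree_compl_eq[OF v] unfolding degree_def by simp
  moreover have "(\<Sum>x\<in>?N. card {y \<in> ?M. E x y}) = (\<Sum>y\<in>?M. card {x \<in> ?N. E y x})"
    by (rule sum_card_swap[OF fin]) (rule sym)
  ultimately show ?thesis using le by linarith
qed

lemma degree_eq_2: "r = 2" and card_eq_5: "card V = 5"
proof -
  have "2 * (r - 1) \<le> (card V - 1 - r) * (r - 1)"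
    using card_ge by (intro mult_right_mono) auto
  thus "r = 2" using degree_product_le two_le_degree by linarith
  thus "card V = 5" using degree_product_le card_ge by simp
qed

lemma graph_iso_C5: "graph_iso V E {0..<5} C5"
proof (rule graph_iso_C5_of_2_regular[OF graph card_eq_5])
  show "\<forall>v\<in>V. degree V E v = 2" using regular degree_eq_2 by simp
  fix u v assume "u \<in> V" "v \<in> V" "u \<noteq> v" "\<not> E u v"
  hence "1 \<le> card {y \<in> V. E u y \<and> E v y}"
    using many_common_neighbours[of u v] degree_eq_2 unfolding compl_def by simp
  hence "{y \<in> V. E u y \<and> E v y} \<noteq> {}" by (metis card.empty not_one_le_zero)
  thus "\<exists>w. E u w \<and> E v w" by blast
qed

end

lemma gamma_qtR_sum_eq_card_plus_5_iff:
  assumes g: "graph V E" and n: "4 \<le> card V"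
  shows "gamma_qtR V E + gamma_qtR V (compl V E) = card V + 5 \<longleftrightarrow> graph_iso V E {0..<5} C5"
proof
  assume "gamma_qtR V E + gamma_qtR V (compl V E) = card V + 5"
  then obtain r where "\<forall>v\<in>V. degree V E v = r" "card V + 2 \<le> gamma_qtR V E + r"
      "r + 3 \<le> gamma_qtR V (compl V E)"
    using gamma_qtR_sum_le(2)[OF g n] by blast
  then interpret qtR_sum_extremal V E r using g by unfold_locales
  show "graph_iso V E {0..<5} C5" by (rule graph_iso_C5)
next
  assume iso: "graph_iso V E {0..<5} C5"
  have n5: "card V = 5" using graph_iso_card[OF iso] by simp
  have set5: "{0..<5::nat} = set [0, 1, 2, 3, 4]" by auto
  have "\<forall>w\<in>{0..<5}. degree {0..<5} C5 w = 2"
    unfolding degree_def set5 set_filter[symmetric] by (simp add: C5_def)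
  moreover obtain h where "bij_betw h V {0..<5}" "\<forall>v\<in>V. degree V E v = degree {0..<5} C5 (h v)"
    using graph_iso_degree[OF iso] by blast
  ultimately have "\<forall>v\<in>V. degree V E v = 2" using bij_betwE by metis
  moreover have "\<forall>v\<in>V. degree V (compl V E) v = 2"
    using calculation degree_compl[OF g] n5 by fastforce
  ultimately have "card V \<le> gamma_qtR V E" "card V \<le> gamma_qtR V (compl V E)"
    using gamma_qtR_ge_card_of_degree_le_2[OF g] gamma_qtR_ge_card_of_degree_le_2[OF graph_compl[OF g]]
    by auto
  thus "gamma_qtR V E + gamma_qtR V (compl V E) = card V + 5"
    using gamma_qtR_sum_le(1)[OF g n] n5 by linarith
qed

lemma graph_iso_compl:
  assumes "graph_iso V E W F"
  shows "graph_iso V (compl V E) W (compl W F)"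
proof -
  obtain h where h: "bij_betw h V W" "\<forall>u\<in>V. \<forall>v\<in>V. E u v \<longleftrightarrow> F (h u) (h v)"
    using assms unfolding graph_iso_def by blast
  have "compl V E u v \<longleftrightarrow> compl W F (h u) (h v)" if "u \<in> V" "v \<in> V" for u v
    using that h bij_betwE[OF h(1)] bij_betw_imp_inj_on[OF h(1)]
    unfolding compl_def by (metis inj_on_eq_iff)
  thus ?thesis unfolding graph_iso_def using h(1) by blast
qed

lemma graph_iso_compl_iff:
  assumes "graph V E" "graph W F"
  shows "graph_iso V E W (compl W F) \<longleftrightarrow> graph_iso V (compl V E) W F"
  using graph_iso_compl[of V E W "compl W F"] graph_iso_compl[of V "compl V E" W F]
  unfolding compl_compl[OF assms(1)] compl_compl[OF assms(2)] by blast

theorem mainTheorem10: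
  fixes V :: "'a set" and E :: "'a \<Rightarrow> 'a \<Rightarrow> bool"
  assumes "graph V E" and "card V \<ge> 4"
  shows "7 \<le> gamma_qtR V E + gamma_qtR V (compl V E)
       \<and> gamma_qtR V E + gamma_qtR V (compl V E) \<le> card V + 5
       \<and> (gamma_qtR V E + gamma_qtR V (compl V E) = 7 \<longleftrightarrow>
            graph_iso V E {0..<4} K4 \<or>
            graph_iso V E {0..<4} (compl {0..<4} K4) \<or>
            graph_iso V E {0..<4} K4_minus_e \<or>
            graph_iso V E {0..<4} (compl {0..<4} K4_minus_e) \<or>
            in_F1 V E \<or> in_F1' V E)
       \<and> (gamma_qtR V E + gamma_qtR V (compl V E) = card V + 5 \<longleftrightarrow>
            graph_iso V E {0..<5} C5)"
proof -
  note g = assms(1) and n = assms(2)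
  have K4: "graph {0..<4} K4" "graph {0..<4} K4_minus_e"
    unfolding graph_def K4_minus_e_def K4_def by (auto simp: doubleton_eq_iff)
  have compl_class: "in_K4_K4e_F1 V (compl V E) \<longleftrightarrow> graph_iso V E {0..<4} (compl {0..<4} K4) \<or>
      graph_iso V E {0..<4} (compl {0..<4} K4_minus_e) \<or> in_F1' V E"
    unfolding in_K4_K4e_F1_def in_F1'_def graph_iso_compl_iff[OF g K4(1)] graph_iso_compl_iff[OF g K4(2)]
    by (rule refl)
  have "gamma_qtR V E + gamma_qtR V (compl V E) = 7 \<longleftrightarrow>
      in_K4_K4e_F1 V E \<or> in_K4_K4e_F1 V (compl V E)"
    unfolding in_K4_K4e_F1_iff[OF g n] in_K4_K4e_F1_iff[OF graph_compl[OF g] n] compl_compl[OF g]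
    by (rule gamma_qtR_sum_eq_7_iff(2)[OF g n])
  hence seven: "gamma_qtR V E + gamma_qtR V (compl V E) = 7 \<longleftrightarrow>
      graph_iso V E {0..<4} K4 \<or> graph_iso V E {0..<4} (compl {0..<4} K4) \<or>
      graph_iso V E {0..<4} K4_minus_e \<or> graph_iso V E {0..<4} (compl {0..<4} K4_minus_e) \<or>
      in_F1 V E \<or> in_F1' V E"
    unfolding compl_class by (simp add: in_K4_K4e_F1_def disj_ac)
  note seven gamma_qtR_sum_eq_7_iff(1)[OF g n] gamma_qtR_sum_le(1)[OF g n]
    gamma_qtR_sum_eq_card_plus_5_iff[OF g n]
  thus ?thesis by (intro conjI)
qed

end
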